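(* If a set of reals $X$ satisfies $\binom{\Omega}{\mathrm T^*}$, then for every $k\ge1$ the power $X^k$ satisfies $\binom{\Omega}{\mathrm T^*}$.
   Context: A set of reals is an infinite topological space homeomorphic to a subset of $\mathbb R$. A cover of a space $X$ is a family $\mathcal U$ of subsets of $X$ with $\bigcup\mathcal U=X$ such that $X\not\subseteq U$ for all $U\in\mathcal U$; it is an $\omega$-cover if every finite subset of $X$ is contained in some member. For a countable cover $\mathcal U=\{U_n\}_{n\in a}$ ($a\subseteq\mathbb N$, enumeration bijective) define $h_{\mathcal U}:X\to P(\mathbb N)$ by $h_{\mathcal U}(x)=\{n\in a: x\in U_n\}$. For $a,b\subseteq\mathbb N$, $a\subseteq^* b$ means $a\setminus b$ is finite. A family $Y$ of infinite subsets of $\mathbb N$ is linearly refinable if for each $y\in Y$ there is an infinite $\hat y\subseteq y$ such that $\{\hat y: y\in Y\}$ is linearly ordered by $\subseteq^*$. A countable cover $\mathcal U$ of $X$ is a $\tau^*$-cover if $h_{\mathcal U}[X]$ consists of infinite sets and is linearly refinable. $\Omega$ denotes the collection of open $\omega$-covers of the space, and $\mathrm T^*$ the collection of countable open $\tau^*$-covers. A space satisfies $\binom{\mathfrak U}{\mathfrak V}$ if every $\mathcal U\in\mathfrak U$ has a subfamily belonging to $\mathfrak V$. *)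

theory Defs
  imports "HOL-Analysis.Analysis"
begin

definition is_cover :: "'a topology \<Rightarrow> 'a set set \<Rightarrow> bool" where
  "is_cover T \<U> \<longleftrightarrow> \<Union>\<U> = topspace T \<and> (\<forall>U\<in>\<U>. \<not> topspace T \<subseteq> U)"

definition omega_cover :: "'a topology \<Rightarrow> 'a set set \<Rightarrow> bool" where
  "omega_cover T \<U> \<longleftrightarrow> is_cover T \<U> \<and>
     (\<forall>F. finite F \<and> F \<subseteq> topspace T \<longrightarrow> (\<exists>U\<in>\<U>. F \<subseteq> U))"

definition almost_subset :: "nat set \<Rightarrow> nat set \<Rightarrow> bool" where
  "almost_subset a b \<longleftrightarrow> finite (a - b)"

definition linearly_refinable :: "nat set set \<Rightarrow> bool" where
  "linearly_refinable Y \<longleftrightarrow>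
     (\<exists>r. (\<forall>y\<in>Y. r y \<subseteq> y \<and> infinite (r y)) \<and>
          (\<forall>y\<in>Y. \<forall>z\<in>Y. almost_subset (r y) (r z) \<or> almost_subset (r z) (r y)))"

definition hU :: "nat set \<Rightarrow> (nat \<Rightarrow> 'a set) \<Rightarrow> 'a \<Rightarrow> nat set" where
  "hU a e x = {n\<in>a. x \<in> e n}"

definition tau_star_cover :: "'a topology \<Rightarrow> 'a set set \<Rightarrow> bool" where
  "tau_star_cover T \<U> \<longleftrightarrow> countable \<U> \<and> is_cover T \<U> \<and>
     (\<exists>(a::nat set) e. bij_betw e a \<U> \<and>
        (\<forall>x\<in>topspace T. infinite (hU a e x)) \<and>
        linearly_refinable (hU a e ` topspace T))"

definition Omega_covers :: "'a topology \<Rightarrow> 'a set set set" where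
  "Omega_covers T = {\<U>. (\<forall>U\<in>\<U>. openin T U) \<and> omega_cover T \<U>}"

definition Tstar_covers :: "'a topology \<Rightarrow> 'a set set set" where
  "Tstar_covers T = {\<U>. countable \<U> \<and> (\<forall>U\<in>\<U>. openin T U) \<and> tau_star_cover T \<U>}"

definition select_binom :: "'a topology \<Rightarrow> ('a topology \<Rightarrow> 'a set set set)
     \<Rightarrow> ('a topology \<Rightarrow> 'a set set set) \<Rightarrow> bool" where
  "select_binom T UU VV \<longleftrightarrow> (\<forall>\<U>\<in>UU T. \<exists>\<V>. \<V> \<subseteq> \<U> \<and> \<V> \<in> VV T)"

end

theory Submission
  imports Defs
begin

text \<open>
  Let \<open>\<U>\<close> be an open \<open>\<omega>\<close>-cover of \<open>X\<^sup>k\<close>. By the tube lemma for the finite cubes \<open>G\<^sup>k\<close>, the open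
  sets \<open>V\<close> whose cube \<open>V\<^sup>k\<close> lies in a member of \<open>\<U>\<close> form an \<open>\<omega>\<close>-cover of \<open>X\<close>. Take a
  \<open>\<tau>\<^sup>*\<close>-subcover \<open>(V\<^sub>n)\<close> with linear refinement \<open>h\<close>, and members \<open>U\<^sub>n \<supseteq> V\<^sub>n\<^sup>k\<close> of \<open>\<U>\<close>. For a point
  \<open>x\<close> of \<open>X\<^sup>k\<close>, the set \<open>h(x\<^sub>1) \<inter> \<dots> \<inter> h(x\<^sub>k)\<close> consists of indices \<open>n\<close> with \<open>x \<in> U\<^sub>n\<close>; it is
  infinite and these sets are again linearly ordered by \<open>\<subseteq>\<^sup>*\<close>, because a finite part of a
  \<open>\<subseteq>\<^sup>*\<close>-chain has a member that is almost contained in all others. Since no \<open>U\<^sub>n\<close> is the whole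
  space, these index sets even name infinitely many distinct \<open>U\<^sub>n\<close>, so they survive the passage to
  an injective enumeration of \<open>{U\<^sub>n}\<close>.
\<close>

abbreviation almost_comparable :: "nat set \<Rightarrow> nat set \<Rightarrow> bool" where
  "almost_comparable A B \<equiv> almost_subset A B \<or> almost_subset B A"

lemma subset_imp_almost_subset: "A \<subseteq> B \<Longrightarrow> almost_subset A B"
  unfolding almost_subset_def by (metis Diff_eq_empty_iff finite.emptyI)

lemma almost_subset_trans: "almost_subset A B \<Longrightarrow> almost_subset B C \<Longrightarrow> almost_subset A C"
  unfolding almost_subset_def by (rule finite_subset[of _ "(A - B) \<union> (B - C)"]) auto

lemma almost_subset_Int: "almost_subset A B \<Longrightarrow> almost_subset A C \<Longrightarrow> almost_subset A (B \<inter> C)"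
  by (simp add: almost_subset_def Diff_Int)

lemma almost_subset_image: "almost_subset A B \<Longrightarrow> almost_subset (f ` A) (f ` B)"
  unfolding almost_subset_def by (meson finite_imageI finite_subset image_diff_subset)

lemma almost_subset_infinite: "almost_subset A B \<Longrightarrow> infinite A \<Longrightarrow> infinite B"
  unfolding almost_subset_def using finite_Diff2 by blast

lemma almost_chain_has_almost_least:
  assumes "finite F" "F \<noteq> {}" "\<And>A B. A \<in> F \<Longrightarrow> B \<in> F \<Longrightarrow> almost_comparable A B"
  shows "\<exists>M\<in>F. almost_subset M (\<Inter>F)"
  using assms
proof (induction F rule: finite_ne_induct)
  case (singleton A)
  then show ?case by (simp add: subset_imp_almost_subset)
next
  case (insert A F)
  then obtain M where M: "M \<in> F" "almost_subset M (\<Inter>F)" by auto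
  show ?case
  proof (cases "almost_subset M A")
    case True
    then show ?thesis using M by (auto intro: almost_subset_Int)
  next
    case False
    then have "almost_subset A M" using insert.prems M(1) by blast
    then have "almost_subset A (\<Inter>F)" using M(2) by (rule almost_subset_trans)
    then show ?thesis by (auto intro: almost_subset_Int subset_imp_almost_subset)
  qed
qed

lemma infinite_Inter_almost_chain:
  assumes "finite F" "F \<noteq> {}" "\<And>A B. A \<in> F \<Longrightarrow> B \<in> F \<Longrightarrow> almost_comparable A B"
    and "\<And>A. A \<in> F \<Longrightarrow> infinite A"
  shows "infinite (\<Inter>F)"
  using almost_chain_has_almost_least[OF assms(1-3)] assms(4) almost_subset_infinite by blast

lemma almost_comparable_Inter:
  assumes chain: "\<And>A B. A \<in> C \<Longrightarrow> B \<in> C \<Longrightarrow> almost_comparable A B"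
    and F: "finite F" "F \<noteq> {}" "F \<subseteq> C" and G: "finite G" "G \<noteq> {}" "G \<subseteq> C"
  shows "almost_comparable (\<Inter>F) (\<Inter>G)"
proof -
  obtain M where M: "M \<in> F" "almost_subset M (\<Inter>F)"
    using almost_chain_has_almost_least[OF F(1,2)] F(3) chain by blast
  obtain N where N: "N \<in> G" "almost_subset N (\<Inter>G)"
    using almost_chain_has_almost_least[OF G(1,2)] G(3) chain by blast
  have "almost_subset (\<Inter>F) M" "almost_subset (\<Inter>G) N"
    using M(1) N(1) by (auto intro: subset_imp_almost_subset)
  moreover have "almost_comparable M N" using chain M(1) N(1) F(3) G(3) by blast
  ultimately show ?thesis using M(2) N(2) by (meson almost_subset_trans)
qed

lemma linearly_refinable_image_iff:
  "linearly_refinable (f ` S) \<longleftrightarrow>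
    (\<exists>R. (\<forall>x\<in>S. R x \<subseteq> f x \<and> infinite (R x)) \<and> (\<forall>x\<in>S. \<forall>y\<in>S. almost_comparable (R x) (R y)))"
proof
  assume "linearly_refinable (f ` S)"
  then obtain r where "\<forall>y\<in>f ` S. r y \<subseteq> y \<and> infinite (r y)"
    and "\<forall>y\<in>f ` S. \<forall>z\<in>f ` S. almost_comparable (r y) (r z)"
    unfolding linearly_refinable_def by blast
  then show "\<exists>R. (\<forall>x\<in>S. R x \<subseteq> f x \<and> infinite (R x)) \<and> (\<forall>x\<in>S. \<forall>y\<in>S. almost_comparable (R x) (R y))"
    by (intro exI[of _ "r \<circ> f"]) auto
next
  assume "\<exists>R. (\<forall>x\<in>S. R x \<subseteq> f x \<and> infinite (R x)) \<and> (\<forall>x\<in>S. \<forall>y\<in>S. almost_comparable (R x) (R y))"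
  then obtain R where R: "\<forall>x\<in>S. R x \<subseteq> f x \<and> infinite (R x)"
    and chain: "\<forall>x\<in>S. \<forall>y\<in>S. almost_comparable (R x) (R y)" by blast
  show "linearly_refinable (f ` S)"
    unfolding linearly_refinable_def
  proof (intro exI[of _ "R \<circ> inv_into S f"] conjI ballI)
    fix y z assume "y \<in> f ` S" "z \<in> f ` S"
    then show "almost_comparable ((R \<circ> inv_into S f) y) ((R \<circ> inv_into S f) z)"
      using chain by (simp add: inv_into_into)
  next
    fix y assume "y \<in> f ` S"
    then show "(R \<circ> inv_into S f) y \<subseteq> y" "infinite ((R \<circ> inv_into S f) y)"
      using R inv_into_into[of y f S] f_inv_into_f[of y f S] by auto
  qed
qed

lemma tau_star_cover_of_enumeration:
  fixes a :: "nat set" and g :: "nat \<Rightarrow> 'a set"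
  assumes cover: "is_cover T (g ` a)"
    and refine: "\<And>x. x \<in> topspace T \<Longrightarrow> R x \<subseteq> hU a g x"
    and distinct: "\<And>x. x \<in> topspace T \<Longrightarrow> infinite (g ` R x)"
    and chain: "\<And>x y. x \<in> topspace T \<Longrightarrow> y \<in> topspace T \<Longrightarrow> almost_comparable (R x) (R y)"
  shows "tau_star_cover T (g ` a)"
proof -
  have "countable (g ` a)" by simp
  then obtain b where "b \<subseteq> a" "g ` a = g ` b" "inj_on g b"
    using countable_image_eq_inj by metis
  then have bij: "bij_betw g b (g ` a)" by (simp add: bij_betw_def)
  define \<phi> where "\<phi> = inv_into b g \<circ> g"
  have \<phi>: "\<phi> n \<in> b \<and> g (\<phi> n) = g n" if "n \<in> a" for n
  proof -
    have "g n \<in> g ` b" using that \<open>g ` a = g ` b\<close> by blast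
    then show ?thesis unfolding \<phi>_def by (simp add: inv_into_into f_inv_into_f)
  qed
  have refine': "\<phi> ` R x \<subseteq> hU b g x \<and> infinite (\<phi> ` R x)" if "x \<in> topspace T" for x
  proof
    show "\<phi> ` R x \<subseteq> hU b g x"
      using refine[OF that] \<phi> by (fastforce simp: hU_def)
    have "g ` \<phi> ` R x = g ` R x"
      using refine[OF that] \<phi> unfolding hU_def image_image by (intro image_cong) auto
    then show "infinite (\<phi> ` R x)"
      using distinct[OF that] by (metis finite_imageI)
  qed
  have "almost_comparable (\<phi> ` R x) (\<phi> ` R y)" if "x \<in> topspace T" "y \<in> topspace T" for x y
    using chain[OF that] almost_subset_image by blast
  then have "linearly_refinable (hU b g ` topspace T)"
    unfolding linearly_refinable_image_iff using refine' by (intro exI[of _ "\<lambda>x. \<phi> ` R x"]) blast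
  moreover have "infinite (hU b g x)" if "x \<in> topspace T" for x
    using refine'[OF that] finite_subset by blast
  ultimately show ?thesis
    unfolding tau_star_cover_def using \<open>countable (g ` a)\<close> cover bij by blast
qed

lemma tube_lemma_power:
  assumes "finite I" "finite F" "F \<subseteq> topspace T"
    and "openin (product_topology (\<lambda>_. T) I) U" "PiE I (\<lambda>_. F) \<subseteq> U"
  shows "\<exists>V. openin T V \<and> F \<subseteq> V \<and> PiE I (\<lambda>_. V) \<subseteq> U"
proof -
  define P where "P = PiE I (\<lambda>_. F)"
  have "\<forall>t\<in>P. \<exists>B. (\<forall>i\<in>I. openin T (B i)) \<and> t \<in> PiE I B \<and> PiE I B \<subseteq> U"
    using assms(4,5) unfolding P_def openin_product_topology_alt by (meson subsetD)
  then obtain B where B: "\<And>t i. t \<in> P \<Longrightarrow> i \<in> I \<Longrightarrow> openin T (B t i)"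
    and B_mem: "\<And>t. t \<in> P \<Longrightarrow> t \<in> PiE I (B t)" and B_sub: "\<And>t. t \<in> P \<Longrightarrow> PiE I (B t) \<subseteq> U"
    by metis
  define W where "W z = (\<Inter>(t, i) \<in> {(t, i) \<in> P \<times> I. t i = z}. B t i) \<inter> topspace T" for z
  define V where "V = (\<Union>z\<in>F. W z)"
  have "finite (P \<times> I)" unfolding P_def using assms(1,2) by (simp add: finite_PiE)
  then have "openin T (W z)" for z
    unfolding W_def using B by (intro openin_INT) (auto elim: finite_subset[rotated])
  then have "openin T V" unfolding V_def by blast
  moreover have "F \<subseteq> V"
  proof
    fix z assume "z \<in> F"
    have "t i \<in> B t i" if "t \<in> P" "i \<in> I" for t i
      using B_mem[OF that(1)] that(2) by (simp add: PiE_iff)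
    then have "z \<in> W z" unfolding W_def using \<open>z \<in> F\<close> assms(3) by auto
    then show "z \<in> V" unfolding V_def using \<open>z \<in> F\<close> by blast
  qed
  moreover have "PiE I (\<lambda>_. V) \<subseteq> U"
  proof
    fix s assume s: "s \<in> PiE I (\<lambda>_. V)"
    then obtain z where z: "\<And>i. i \<in> I \<Longrightarrow> z i \<in> F \<and> s i \<in> W (z i)"
      unfolding V_def by (simp add: PiE_iff) metis
    define t where "t = restrict z I"
    have t: "t \<in> P" unfolding P_def t_def using z by auto
    have "s i \<in> B t i" if "i \<in> I" for i
      using z[OF that] t that unfolding W_def t_def by auto
    then have "s \<in> PiE I (B t)" using s by (auto simp: PiE_iff)
    then show "s \<in> U" using B_sub[OF t] by blast
  qed
  ultimately show ?thesis by blast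
qed

lemma Omega_covers_cube_bases:
  assumes "finite I" and \<U>: "\<U> \<in> Omega_covers (product_topology (\<lambda>_. T) I)"
  shows "{V. openin T V \<and> (\<exists>U\<in>\<U>. PiE I (\<lambda>_. V) \<subseteq> U)} \<in> Omega_covers T"
    (is "?W \<in> _")
proof -
  let ?P = "product_topology (\<lambda>_. T) I"
  have \<U>_open: "\<And>U. U \<in> \<U> \<Longrightarrow> openin ?P U"
    and \<U>_proper: "\<And>U. U \<in> \<U> \<Longrightarrow> \<not> topspace ?P \<subseteq> U"
    and \<U>_omega: "\<And>F. finite F \<Longrightarrow> F \<subseteq> topspace ?P \<Longrightarrow> \<exists>U\<in>\<U>. F \<subseteq> U"
    using \<U> unfolding Omega_covers_def omega_cover_def is_cover_def by auto
  have W_omega: "\<exists>V\<in>?W. G \<subseteq> V" if G: "finite G" "G \<subseteq> topspace T" for G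
  proof -
    have "finite (PiE I (\<lambda>_. G))" "PiE I (\<lambda>_. G) \<subseteq> topspace ?P"
      using G \<open>finite I\<close> by (auto simp: finite_PiE PiE_mono)
    then obtain U where U: "U \<in> \<U>" "PiE I (\<lambda>_. G) \<subseteq> U" using \<U>_omega by blast
    then obtain V where "openin T V" "G \<subseteq> V" "PiE I (\<lambda>_. V) \<subseteq> U"
      using tube_lemma_power[OF \<open>finite I\<close> G \<U>_open[OF U(1)] U(2)] by blast
    then show ?thesis using \<open>U \<in> \<U>\<close> by blast
  qed
  have union_W: "\<Union>?W = topspace T"
  proof
    show "\<Union>?W \<subseteq> topspace T" by (auto dest: openin_subset)
    show "topspace T \<subseteq> \<Union>?W"
    proof
      fix x assume "x \<in> topspace T"
      then show "x \<in> \<Union>?W" using W_omega[of "{x}"] by blast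
    qed
  qed
  have proper_W: "\<forall>V\<in>?W. \<not> topspace T \<subseteq> V"
  proof (intro ballI notI)
    fix V assume "V \<in> ?W" "topspace T \<subseteq> V"
    then have "topspace ?P \<subseteq> PiE I (\<lambda>_. V)" by (simp add: PiE_mono)
    then show False using \<open>V \<in> ?W\<close> \<U>_proper by blast
  qed
  have "\<forall>V\<in>?W. openin T V" by blast
  moreover have "\<forall>G. finite G \<and> G \<subseteq> topspace T \<longrightarrow> (\<exists>V\<in>?W. G \<subseteq> V)"
    using W_omega by blast
  ultimately show ?thesis
    unfolding Omega_covers_def omega_cover_def is_cover_def
    using union_W proper_W by (intro CollectI conjI)
qed

lemma Inter_refinements_subset_hU:
  assumes "I \<noteq> {}" "xs \<in> PiE I (\<lambda>_. X)"
    and refine: "\<And>x. x \<in> X \<Longrightarrow> h x \<subseteq> hU a e x"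
    and cube: "\<And>n. n \<in> a \<Longrightarrow> PiE I (\<lambda>_. e n) \<subseteq> g n"
  shows "(\<Inter>i\<in>I. h (xs i)) \<subseteq> hU a g xs"
proof
  fix n assume "n \<in> (\<Inter>i\<in>I. h (xs i))"
  then have "n \<in> a \<and> xs i \<in> e n" if "i \<in> I" for i
    using refine[of "xs i"] assms(2) that unfolding hU_def by auto
  then have "n \<in> a" "xs \<in> PiE I (\<lambda>_. e n)"
    using assms(1,2) by (auto simp: PiE_iff)
  then show "n \<in> hU a g xs" using cube unfolding hU_def by blast
qed

lemma infinite_image_Inter_refinements:
  assumes "finite I" "I \<noteq> {}" "xs \<in> PiE I (\<lambda>_. X)"
    and refine: "\<And>x. x \<in> X \<Longrightarrow> h x \<subseteq> hU a e x"
    and infinite: "\<And>x. x \<in> X \<Longrightarrow> infinite (h x)"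
    and chain: "\<And>x y. x \<in> X \<Longrightarrow> y \<in> X \<Longrightarrow> almost_comparable (h x) (h y)"
    and cube: "\<And>n. n \<in> a \<Longrightarrow> PiE I (\<lambda>_. e n) \<subseteq> g n"
    and proper: "\<And>n. n \<in> a \<Longrightarrow> \<not> PiE I (\<lambda>_. X) \<subseteq> g n"
  shows "infinite (g ` (\<Inter>i\<in>I. h (xs i)))"
proof
  define S where "S = (\<Inter>i\<in>I. h (xs i))"
  assume "finite (g ` S)"
  \<comment> \<open>Choose a point outside each of the finitely many \<open>g n\<close>; the refinements at all their
    coordinates and at those of \<open>xs\<close> share an index \<open>n\<close>, whose cube then contains the point
    chosen outside \<open>g n\<close>.\<close>
  have h_mem: "n \<in> a \<and> x \<in> e n" if "x \<in> X" "n \<in> h x" for x n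
    using refine[OF that(1)] that(2) by (auto simp: hU_def)
  have "S \<subseteq> a"
    using Inter_refinements_subset_hU[OF assms(2,3) refine cube] unfolding S_def hU_def by blast
  then have "\<forall>U\<in>g ` S. \<exists>ys \<in> PiE I (\<lambda>_. X). ys \<notin> U" using proper by blast
  then obtain out where out: "\<And>U. U \<in> g ` S \<Longrightarrow> out U \<in> PiE I (\<lambda>_. X) \<and> out U \<notin> U"
    by metis
  define Z where "Z = xs ` I \<union> (\<Union>U\<in>g ` S. out U ` I)"
  have "finite (\<Union>U\<in>g ` S. out U ` I)"
    using \<open>finite I\<close> by (intro finite_UN_I[OF \<open>finite (g ` S)\<close>]) simp
  then have "finite Z" unfolding Z_def using \<open>finite I\<close> by blast
  moreover have "Z \<noteq> {}" unfolding Z_def using \<open>I \<noteq> {}\<close> by blast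
  moreover have "Z \<subseteq> X" unfolding Z_def using \<open>xs \<in> PiE I (\<lambda>_. X)\<close> out by fastforce
  ultimately have "infinite (\<Inter>(h ` Z))"
    by (intro infinite_Inter_almost_chain) (use infinite chain in blast)+
  then obtain n where n: "\<And>z. z \<in> Z \<Longrightarrow> n \<in> h z" by (metis InterD ex_in_conv finite.emptyI imageI)
  then have "n \<in> S" unfolding S_def Z_def by blast
  then have "n \<in> a" using \<open>S \<subseteq> a\<close> by blast
  have "g n \<in> g ` S" using \<open>n \<in> S\<close> by blast
  then have "out (g n) i \<in> e n" if "i \<in> I" for i
    using n[of "out (g n) i"] h_mem \<open>Z \<subseteq> X\<close> that unfolding Z_def by blast
  then have "out (g n) \<in> PiE I (\<lambda>_. e n)"
    using out[OF \<open>g n \<in> g ` S\<close>] by (auto simp: PiE_iff)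
  then show False using out[OF \<open>g n \<in> g ` S\<close>] cube[OF \<open>n \<in> a\<close>] by blast
qed

lemma Tstar_subcover_power:
  assumes "finite I" "I \<noteq> {}" and \<V>: "\<V> \<in> Tstar_covers T"
    and \<U>: "\<And>U. U \<in> \<U> \<Longrightarrow>
      openin (product_topology (\<lambda>_. T) I) U \<and> \<not> topspace (product_topology (\<lambda>_. T) I) \<subseteq> U"
    and cubes: "\<And>V. V \<in> \<V> \<Longrightarrow> \<exists>U\<in>\<U>. PiE I (\<lambda>_. V) \<subseteq> U"
  shows "\<exists>\<W>\<subseteq>\<U>. \<W> \<in> Tstar_covers (product_topology (\<lambda>_. T) I)"
proof -
  let ?P = "product_topology (\<lambda>_. T) I"
  obtain a e where e: "bij_betw e a \<V>" and "linearly_refinable (hU a e ` topspace T)"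
    using \<V> unfolding Tstar_covers_def tau_star_cover_def by blast
  then obtain h where refine: "\<And>x. x \<in> topspace T \<Longrightarrow> h x \<subseteq> hU a e x"
    and infinite: "\<And>x. x \<in> topspace T \<Longrightarrow> infinite (h x)"
    and chain: "\<And>x y. x \<in> topspace T \<Longrightarrow> y \<in> topspace T \<Longrightarrow> almost_comparable (h x) (h y)"
    unfolding linearly_refinable_image_iff by blast
  have "\<forall>n\<in>a. \<exists>U. U \<in> \<U> \<and> PiE I (\<lambda>_. e n) \<subseteq> U"
    using cubes bij_betw_apply[OF e] by blast
  then obtain g where g: "\<And>n. n \<in> a \<Longrightarrow> g n \<in> \<U> \<and> PiE I (\<lambda>_. e n) \<subseteq> g n"
    by (metis bchoice)
  define S where "S xs = (\<Inter>i\<in>I. h (xs i))" for xs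
  have S_infinite: "infinite (g ` S xs)" if "xs \<in> topspace ?P" for xs
    unfolding S_def
  proof (rule infinite_image_Inter_refinements[OF \<open>finite I\<close> \<open>I \<noteq> {}\<close>])
    show "xs \<in> PiE I (\<lambda>_. topspace T)" using that by simp
    show "PiE I (\<lambda>_. e n) \<subseteq> g n" "\<not> PiE I (\<lambda>_. topspace T) \<subseteq> g n" if "n \<in> a" for n
      using g[OF that] \<U> by auto
  qed (use refine infinite chain in auto)
  have S_sub: "S xs \<subseteq> hU a g xs" if "xs \<in> topspace ?P" for xs
    unfolding S_def
    by (rule Inter_refinements_subset_hU[OF \<open>I \<noteq> {}\<close> _ refine]) (use that g in auto)
  have S_chain: "almost_comparable (S xs) (S ys)" if "xs \<in> topspace ?P" "ys \<in> topspace ?P" for xs ys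
  proof -
    have "almost_comparable A B" if "A \<in> h ` topspace T" "B \<in> h ` topspace T" for A B
      using that chain by blast
    then show ?thesis
      unfolding S_def using that \<open>finite I\<close> \<open>I \<noteq> {}\<close>
      by (intro almost_comparable_Inter[of "h ` topspace T"]) (auto simp: PiE_iff)
  qed
  have "\<Union>(g ` a) = topspace ?P"
  proof
    show "\<Union>(g ` a) \<subseteq> topspace ?P" using g \<U> openin_subset by (meson UN_least)
    show "topspace ?P \<subseteq> \<Union>(g ` a)"
    proof
      fix xs assume xs: "xs \<in> topspace ?P"
      then obtain n where "n \<in> S xs" using S_infinite by fastforce
      then show "xs \<in> \<Union>(g ` a)" using S_sub[OF xs] unfolding hU_def by blast
    qed
  qed
  then have "is_cover ?P (g ` a)" unfolding is_cover_def using g \<U> by blast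
  then have "tau_star_cover ?P (g ` a)"
    using S_sub S_infinite S_chain by (rule tau_star_cover_of_enumeration)
  then show ?thesis
    using g \<U> unfolding Tstar_covers_def by (intro exI[of _ "g ` a"]) auto
qed

theorem theorem8p2:
  fixes X :: "real set" and k :: nat
  assumes "infinite X"
    and "select_binom (top_of_set X) Omega_covers Tstar_covers"
    and "k \<ge> 1"
  shows "select_binom (product_topology (\<lambda>_. top_of_set X) {..<k}) Omega_covers Tstar_covers"
  unfolding select_binom_def
proof
  fix \<U> assume \<U>: "\<U> \<in> Omega_covers (product_topology (\<lambda>_. top_of_set X) {..<k})"
  let ?W = "{V. openin (top_of_set X) V \<and> (\<exists>U\<in>\<U>. PiE {..<k} (\<lambda>_. V) \<subseteq> U)}"
  have "?W \<in> Omega_covers (top_of_set X)"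
    using Omega_covers_cube_bases[OF _ \<U>] by simp
  then obtain \<V> where \<V>: "\<V> \<in> Tstar_covers (top_of_set X)" and "\<V> \<subseteq> ?W"
    using assms(2) unfolding select_binom_def by blast
  then have cubes: "\<And>V. V \<in> \<V> \<Longrightarrow> \<exists>U\<in>\<U>. PiE {..<k} (\<lambda>_. V) \<subseteq> U" by blast
  have proper: "openin (product_topology (\<lambda>_. top_of_set X) {..<k}) U \<and>
      \<not> topspace (product_topology (\<lambda>_. top_of_set X) {..<k}) \<subseteq> U" if "U \<in> \<U>" for U
    using \<U> that unfolding Omega_covers_def omega_cover_def is_cover_def by auto
  have "{..<k} \<noteq> {}" using \<open>k \<ge> 1\<close> by (simp add: lessThan_empty_iff)
  from Tstar_subcover_power[OF finite_lessThan this \<V> proper cubes]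
  show "\<exists>\<W>\<subseteq>\<U>. \<W> \<in> Tstar_covers (product_topology (\<lambda>_. top_of_set X) {..<k})" .
qed

end
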